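(* Let $p$ be a prime, $q=p^e$, $m,k\ge1$, and let $d$ be an integer with $0<d\le k(q^m-1)$. Then there exists a homogeneous polynomial $f\in\mathbb{F}_{q^m}[x_1,\dots,x_k]$ of degree $d$ such that $\nu_p\big(N(f=y^q-y)\big)\le em\lceil k/d\rceil$.
   Context: $N(f=y^q-y)$ denotes the number of $(x_1,\dots,x_k,y)\in\mathbb{F}_{q^m}^{k+1}$ with $f(x_1,\dots,x_k)=y^q-y$; $\nu_p$ is the $p$-adic valuation. *)

theory Defs
  imports Complex_Main "HOL-Library.Poly_Mapping" "HOL-Library.FuncSet" "HOL-Computational_Algebra.Primes"
begin

text \<open>Multivariate polynomials over a commutative ring: finitely supported maps from
  monomials (finitely supported exponent vectors, variables indexed by nat) to coefficients.\<close>
type_synonym 'a mpoly = "(nat \<Rightarrow>\<^sub>0 nat) \<Rightarrow>\<^sub>0 'a"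

definition mpoly_in_vars :: "nat \<Rightarrow> 'a::zero mpoly \<Rightarrow> bool" where
  "mpoly_in_vars k f \<longleftrightarrow> (\<forall>\<alpha>\<in>Poly_Mapping.keys f. Poly_Mapping.keys \<alpha> \<subseteq> {..<k})"

definition monomial_degree :: "(nat \<Rightarrow>\<^sub>0 nat) \<Rightarrow> nat" where
  "monomial_degree \<alpha> = (\<Sum>i\<in>Poly_Mapping.keys \<alpha>. Poly_Mapping.lookup \<alpha> i)"

definition homogeneous_of_degree :: "nat \<Rightarrow> 'a::zero mpoly \<Rightarrow> bool" where
  "homogeneous_of_degree d f \<longleftrightarrow> f \<noteq> 0 \<and> (\<forall>\<alpha>\<in>Poly_Mapping.keys f. monomial_degree \<alpha> = d)"

definition mpoly_eval :: "'a::comm_ring_1 mpoly \<Rightarrow> (nat \<Rightarrow> 'a) \<Rightarrow> 'a" where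
  "mpoly_eval f x = (\<Sum>\<alpha>\<in>Poly_Mapping.keys f. Poly_Mapping.lookup f \<alpha> * (\<Prod>i\<in>Poly_Mapping.keys \<alpha>. x i ^ Poly_Mapping.lookup \<alpha> i))"

text \<open>N(f = y^q - y): number of (x_1..x_k, y) in K^(k+1) with f(x) = y^q - y,
  where points of K^k are extensional functions on {0..<k}.\<close>
definition N_AS :: "nat \<Rightarrow> nat \<Rightarrow> 'a::{finite,field} mpoly \<Rightarrow> nat" where
  "N_AS k q f = card {(x, y). x \<in> ({..<k} \<rightarrow>\<^sub>E (UNIV::'a set)) \<and> mpoly_eval f x = y ^ q - y}"

end

theory Submission
  imports Defs "HOL-Library.Cardinality" "HOL-Library.Disjoint_Sets" "HOL-Number_Theory.Residues"
begin

(* Let Q = p^n be the size of the field and n0 the number of roots of y^q = y, a power of p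
   larger than 1. As y |-> y^q - y is additive, each of its fibres has 0 or n0 points.
   If f = sum_{j<c} x_j R_j with the R_j involving only x_c, ..., x_(k-1), then for fixed values
   of these variables f is linear in x_0, ..., x_(c-1), so N(f = y^q - y) is Q^c times a sum
   that is congruent to -B mod p, where B counts the common zeros of the R_j.
   For c = ceil(k/d) the k - c remaining variables split into at most c blocks of at most d - 1
   variables; taking for R_j a monomial of degree d - 1 using every variable of one block,
   B is a product of factors Q^s - (Q - 1)^s prime to p, whence nu_p(N) = n c.
   The cases d = 1 (f = x_0, N = Q^k) and k = 1 (averaging over the polynomials a x^d gives
   one with N <= Q) are treated separately. *)

section \<open>Artin--Schreier fibres\<close>

lemma CHAR_eq_of_card_eq_prime_power:
  assumes "prime p" "CARD('a::{finite,field}) = p ^ n"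
  shows "CHAR('a) = p"
proof -
  have "prime CHAR('a)"
    by (intro prime_CHAR_semidom finite_imp_CHAR_pos) simp
  moreover from this have "CHAR('a) dvd p"
    using CHAR_dvd_CARD[where 'a='a] assms(2) prime_dvd_power by metis
  ultimately show ?thesis
    using assms(1) primes_dvd_imp_eq by blast
qed

lemma prime_dvd_CARD:
  assumes "prime p" "CARD('a::{finite,field}) = p ^ n"
  shows "p dvd CARD('a)"
  using CHAR_dvd_CARD[where 'a = 'a] CHAR_eq_of_card_eq_prime_power[OF assms] by simp

definition AS_count :: "nat \<Rightarrow> 'a::{finite,field} \<Rightarrow> nat" where
  "AS_count q w = card {y. y ^ q - y = w}"

lemma sum_AS_count: "(\<Sum>w\<in>UNIV. AS_count q (w::'a::{finite,field})) = CARD('a)"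
proof -
  have "CARD('a) = card (\<Union>w. {y::'a. y ^ q - y = w})"
    by (rule arg_cong[where f = card]) auto
  also have "\<dots> = (\<Sum>w\<in>UNIV. card {y::'a. y ^ q - y = w})"
    by (rule card_UN_disjoint) auto
  finally show ?thesis
    by (simp add: AS_count_def)
qed

lemma AS_count_zero_ge_2:
  assumes "q \<ge> 1"
  shows "AS_count q (0::'a::{finite,field}) \<ge> 2"
proof -
  have "card {0, 1::'a} \<le> card {y::'a. y ^ q - y = 0}"
    using assms by (intro card_mono) auto
  then show ?thesis
    by (simp add: AS_count_def)
qed

text \<open>For \<open>q\<close> a power of the characteristic, \<open>y \<mapsto> y ^ q - y\<close> is additive, so its
  nonempty fibres are translates of its kernel.\<close>

lemma AS_count_eq_0_or_zero:
  fixes w :: "'a::{finite,field}"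
  assumes "prime CHAR('a)" "q = CHAR('a) ^ e"
  shows "AS_count q w = 0 \<or> AS_count q w = AS_count q (0::'a)"
proof (cases "\<exists>y0. y0 ^ q - y0 = w")
  case True
  then obtain y0 where y0: "y0 ^ q - y0 = w" by blast
  have add: "(a + b) ^ q = a ^ q + b ^ q" for a b :: 'a
    using freshmans_dream'[OF assms] by blast
  have "{y. y ^ q - y = w} = (\<lambda>z. z + y0) ` {z. z ^ q - z = 0}"
  proof (intro Set.set_eqI iffI)
    fix y assume "y \<in> {y. y ^ q - y = w}"
    then have "(y - y0) ^ q - (y - y0) = 0"
      using add[of "y - y0" y0] y0 by (simp add: algebra_simps)
    then show "y \<in> (\<lambda>z. z + y0) ` {z. z ^ q - z = 0}"
      by (intro image_eqI[of _ _ "y - y0"]) auto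
  qed (use add y0 in \<open>auto simp: algebra_simps\<close>)
  then have "AS_count q w = AS_count q (0::'a)"
    by (simp add: AS_count_def card_image inj_on_def)
  then show ?thesis ..
qed (simp add: AS_count_def)

lemma prime_dvd_AS_count_zero:
  assumes "prime p" "CARD('a::{finite,field}) = p ^ n" "q = p ^ e" "e \<ge> 1"
  shows "p dvd AS_count q (0::'a)"
proof -
  define n0 where "n0 = AS_count q (0::'a)"
  have "CHAR('a) = p"
    using CHAR_eq_of_card_eq_prime_power assms(1,2) by blast
  then have fibre: "AS_count q w > 0 \<Longrightarrow> AS_count q w = n0" for w :: 'a
    using AS_count_eq_0_or_zero[of q e w] assms(1,3) by (auto simp: n0_def)
  have "p ^ n = (\<Sum>w\<in>UNIV. AS_count q (w::'a))"
    using assms(2) sum_AS_count by metis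
  also have "\<dots> = (\<Sum>w\<in>{w::'a. AS_count q w \<noteq> 0}. n0)"
    by (intro sum.mono_neutral_cong_right) (auto intro: fibre)
  finally have "n0 dvd p ^ n"
    by simp
  then obtain i where i: "n0 = p ^ i"
    using divides_primepow_nat assms(1) by blast
  have "n0 \<ge> 2"
    unfolding n0_def using assms(1,3) by (simp add: AS_count_zero_ge_2 Suc_leI prime_gt_0_nat)
  then have "i \<noteq> 0"
    using i by (cases i) auto
  then show ?thesis
    using i n0_def by simp
qed

section \<open>Counting over function spaces\<close>

lemma bij_betw_restrict_PiE_Un:
  assumes "I \<inter> J = {}"
  shows "bij_betw (\<lambda>x. (restrict x I, restrict x J)) (PiE (I \<union> J) A) (PiE I A \<times> PiE J A)"
  by (rule bij_betw_byWitness[where f' = "\<lambda>(y, z) i. if i \<in> I then y i else z i"])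
     (use assms in \<open>auto simp: PiE_def extensional_def fun_eq_iff\<close>)

lemma sum_PiE_Un:
  assumes "I \<inter> J = {}"
  shows "(\<Sum>x\<in>PiE (I \<union> J) A. g x) =
    (\<Sum>y\<in>PiE I A. \<Sum>z\<in>PiE J A. g (\<lambda>i. if i \<in> I then y i else z i))"
proof -
  have "(\<Sum>x\<in>PiE (I \<union> J) A. g x) =
      (\<Sum>x\<in>PiE (I \<union> J) A. (\<lambda>(y, z). g (\<lambda>i. if i \<in> I then y i else z i)) (restrict x I, restrict x J))"
    by (intro sum.cong refl, simp, intro arg_cong[where f = g] ext) (auto simp: PiE_def extensional_def)
  also have "\<dots> = (\<Sum>(y, z)\<in>PiE I A \<times> PiE J A. g (\<lambda>i. if i \<in> I then y i else z i))"
    by (rule sum.reindex_bij_betw[OF bij_betw_restrict_PiE_Un[OF assms]])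
  also have "\<dots> = (\<Sum>y\<in>PiE I A. \<Sum>z\<in>PiE J A. g (\<lambda>i. if i \<in> I then y i else z i))"
    by (rule sum.cartesian_product[symmetric])
  finally show ?thesis .
qed

lemma card_PiE_Un_filter:
  assumes "I \<inter> J = {}"
  shows "card {x\<in>PiE (I \<union> J) A. P (restrict x I) \<and> Q (restrict x J)} =
    card {y\<in>PiE I A. P y} * card {z\<in>PiE J A. Q z}"
proof -
  have restrict_merge: "restrict (\<lambda>i. if i \<in> I then y i else z i) I = y"
    "restrict (\<lambda>i. if i \<in> I then y i else z i) J = z"
    if "y \<in> PiE I A" "z \<in> PiE J A" for y z
    using that assms by (auto simp: PiE_def extensional_def fun_eq_iff)
  have "bij_betw (\<lambda>x. (restrict x I, restrict x J))
      {x\<in>PiE (I \<union> J) A. P (restrict x I) \<and> Q (restrict x J)} ({y\<in>PiE I A. P y} \<times> {z\<in>PiE J A. Q z})"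
    by (rule bij_betw_byWitness[where f' = "\<lambda>(y, z) i. if i \<in> I then y i else z i"])
      (auto simp: restrict_merge, auto simp: PiE_def extensional_def fun_eq_iff split: if_splits)
  then show ?thesis
    by (simp add: bij_betw_same_card card_cartesian_product)
qed

lemma sum_PiE_singleton: "(\<Sum>v\<in>PiE {a} (\<lambda>_. A). g (v a)) = (\<Sum>t\<in>A. g t)"
  by (rule sum.reindex_bij_witness[of _ "\<lambda>t i. if i = a then t else undefined" "\<lambda>v. v a"])
     (auto simp: PiE_def extensional_def fun_eq_iff)

lemma sum_affine_reindex:
  fixes r s :: "'a::{finite,field}"
  assumes "r \<noteq> 0"
  shows "(\<Sum>t\<in>UNIV. h (t * r + s)) = (\<Sum>w\<in>UNIV. h w)"
  by (rule sum.reindex_bij_witness[of _ "\<lambda>w. (w - s) / r" "\<lambda>t. t * r + s"])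
     (use assms in \<open>auto simp: field_simps\<close>)

lemma sum_PiE_linear_form:
  fixes r :: "'i \<Rightarrow> 'a::{finite,field}" and h :: "'a \<Rightarrow> 'b::comm_semiring_1"
  assumes "finite P" "j0 \<in> P" "r j0 \<noteq> 0"
  shows "(\<Sum>u\<in>PiE P (\<lambda>_. UNIV). h (\<Sum>j\<in>P. u j * r j)) =
    of_nat (CARD('a) ^ (card P - 1)) * (\<Sum>w\<in>UNIV. h w)"
proof -
  let ?P' = "P - {j0}"
  have "(\<Sum>u\<in>PiE P (\<lambda>_. UNIV). h (\<Sum>j\<in>P. u j * r j)) =
      (\<Sum>y\<in>PiE ?P' (\<lambda>_. UNIV). \<Sum>z\<in>PiE {j0} (\<lambda>_. UNIV).
        h (\<Sum>j\<in>P. (if j \<in> ?P' then y j else z j) * r j))"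
    using sum_PiE_Un[where I = ?P' and J = "{j0}" and A = "\<lambda>_. UNIV" and g = "\<lambda>u. h (\<Sum>j\<in>P. u j * r j)"]
      assms(2) by (simp add: insert_absorb)
  also have "\<dots> = (\<Sum>y\<in>PiE ?P' (\<lambda>_. UNIV). \<Sum>z\<in>PiE {j0} (\<lambda>_. UNIV).
      h (z j0 * r j0 + (\<Sum>j\<in>?P'. y j * r j)))"
    using assms(1,2) by (intro sum.cong refl arg_cong[where f = h]) (simp add: sum.remove)
  also have "\<dots> = (\<Sum>y\<in>PiE ?P' (\<lambda>_. UNIV::'a set). \<Sum>w\<in>UNIV. h w)"
  proof (intro sum.cong refl)
    fix y :: "'i \<Rightarrow> 'a"
    show "(\<Sum>z\<in>PiE {j0} (\<lambda>_. UNIV). h (z j0 * r j0 + (\<Sum>j\<in>?P'. y j * r j))) = (\<Sum>w\<in>UNIV. h w)"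
      using sum_PiE_singleton[of "\<lambda>t. h (t * r j0 + (\<Sum>j\<in>?P'. y j * r j))" j0 UNIV]
        sum_affine_reindex[OF assms(3), of h] by simp
  qed
  also have "\<dots> = of_nat (CARD('a) ^ (card P - 1)) * (\<Sum>w\<in>UNIV. h w)"
    using assms(1,2) by (simp add: card_PiE)
  finally show ?thesis .
qed

text \<open>For fixed values \<open>z\<close> of the coordinates in \<open>Z\<close> the form is linear in the pivot
  variables, so it either vanishes identically or takes every value equally often.\<close>

lemma sum_AS_count_pivot:
  fixes R :: "'i \<Rightarrow> ('i \<Rightarrow> 'a::{finite,field}) \<Rightarrow> 'a"
  assumes "finite P" "finite Z" "P \<inter> Z = {}"
    and local: "\<And>j x x'. j \<in> P \<Longrightarrow> (\<And>i. i \<in> Z \<Longrightarrow> x i = x' i) \<Longrightarrow> R j x = R j x'"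
  shows "(\<Sum>x\<in>PiE (Z \<union> P) (\<lambda>_. UNIV). AS_count q (\<Sum>j\<in>P. x j * R j x)) =
    CARD('a) ^ card P * (\<Sum>z\<in>PiE Z (\<lambda>_. UNIV). if \<forall>j\<in>P. R j z = 0 then AS_count q (0::'a) else 1)"
proof -
  have inner: "(\<Sum>u\<in>PiE P (\<lambda>_. UNIV). AS_count q (\<Sum>j\<in>P. u j * R j z)) =
      CARD('a) ^ card P * (if \<forall>j\<in>P. R j z = 0 then AS_count q (0::'a) else 1)" for z
  proof (cases "\<forall>j\<in>P. R j z = 0")
    case True
    then show ?thesis
      using assms(1) by (simp add: card_PiE)
  next
    case False
    then obtain j0 where "j0 \<in> P" "R j0 z \<noteq> 0"
      by blast
    moreover from this have "CARD('a) ^ (card P - 1) * CARD('a) = CARD('a) ^ card P"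
      using assms(1) by (metis card_gt_0_iff empty_iff power_minus_mult)
    ultimately show ?thesis
      using False sum_PiE_linear_form[OF assms(1), of j0 "\<lambda>j. R j z" "AS_count q"]
      by (simp add: sum_AS_count) blast
  qed
  have "(\<Sum>x\<in>PiE (Z \<union> P) (\<lambda>_. UNIV). AS_count q (\<Sum>j\<in>P. x j * R j x)) =
      (\<Sum>z\<in>PiE Z (\<lambda>_. UNIV). \<Sum>u\<in>PiE P (\<lambda>_. UNIV).
        AS_count q (\<Sum>j\<in>P. (if j \<in> Z then z j else u j) * R j (\<lambda>i. if i \<in> Z then z i else u i)))"
    using assms(3) by (intro sum_PiE_Un) auto
  also have "\<dots> = (\<Sum>z\<in>PiE Z (\<lambda>_. UNIV). \<Sum>u\<in>PiE P (\<lambda>_. UNIV). AS_count q (\<Sum>j\<in>P. u j * R j z))"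
  proof (intro sum.cong refl arg_cong[where f = "AS_count q"])
    fix z u :: "'i \<Rightarrow> 'a" and j
    assume "j \<in> P"
    moreover from this have "R j (\<lambda>i. if i \<in> Z then z i else u i) = R j z"
      by (rule local) simp
    ultimately show "(if j \<in> Z then z j else u j) * R j (\<lambda>i. if i \<in> Z then z i else u i) = u j * R j z"
      using assms(3) by auto
  qed
  finally show ?thesis
    by (simp add: inner sum_distrib_left)
qed

lemma sum_if_add_card_filter:
  assumes "finite A"
  shows "(\<Sum>x\<in>A. if P x then n else 1) + card {x\<in>A. P x} = card A + n * card {x\<in>A. P x}"
proof -
  have "card A = card {x\<in>A. P x} + card {x\<in>A. \<not> P x}"
    using assms by (subst card_Un_disjoint[symmetric]) (auto intro: arg_cong[where f = card])
  then show ?thesis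
    using assms by (simp add: sum.If_cases Int_def Collect_neg_eq[symmetric])
qed

lemma card_PiE_with_zero:
  assumes "finite S"
  shows "CARD('a::{finite,field}) ^ card S =
    card {w\<in>PiE S (\<lambda>_. UNIV::'a set). \<exists>i\<in>S. w i = 0} + (CARD('a) - 1) ^ card S"
proof -
  define A where "A = {w\<in>PiE S (\<lambda>_. UNIV::'a set). \<exists>i\<in>S. w i = 0}"
  have "PiE S (\<lambda>_. UNIV::'a set) = A \<union> PiE S (\<lambda>_. UNIV - {0})"
    by (auto simp: A_def PiE_iff extensional_def)
  moreover have "A \<inter> PiE S (\<lambda>_. UNIV - {0}) = {}"
    by (auto simp: A_def PiE_iff)
  ultimately have "card (PiE S (\<lambda>_. UNIV::'a set)) = card A + card (PiE S (\<lambda>_. UNIV - {0::'a}))"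
    using assms by (metis card_Un_disjoint finite_PiE finite_Un finite)
  then show ?thesis
    using assms by (simp add: A_def card_PiE card_Diff_singleton)
qed

lemma not_dvd_card_PiE_with_zero:
  assumes "prime p" "p dvd CARD('a::{finite,field})" "finite S" "S \<noteq> {}"
  shows "\<not> p dvd card {w\<in>PiE S (\<lambda>_. UNIV::'a set). \<exists>i\<in>S. w i = 0}"
proof
  assume "p dvd card {w\<in>PiE S (\<lambda>_. UNIV::'a set). \<exists>i\<in>S. w i = 0}"
  moreover have "p dvd CARD('a) ^ card S"
    using assms(2-4) by (meson card_gt_0_iff dvd_power dvd_trans)
  ultimately have "p dvd (CARD('a) - 1) ^ card S"
    using card_PiE_with_zero[OF assms(3), where 'a = 'a] by (simp add: dvd_add_right_iff)
  then have "p dvd CARD('a) - 1"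
    using assms(1) prime_dvd_power by blast
  with assms(2) have "p dvd CARD('a) - (CARD('a) - 1)"
    by (rule dvd_diff_nat)
  moreover have "CARD('a) - (CARD('a) - 1) = 1"
    using finite_UNIV_card_ge_0[where 'a = 'a] by simp
  ultimately show False
    using assms(1) by simp
qed

lemma not_dvd_card_PiE_zero_in_each_block:
  assumes "prime p" "p dvd CARD('a::{finite,field})" "finite J"
    and "\<And>j. j \<in> J \<Longrightarrow> finite (G j)" "\<And>j. j \<in> J \<Longrightarrow> G j \<noteq> {}" "disjoint_family_on G J"
  shows "\<not> p dvd card {z\<in>PiE (\<Union>j\<in>J. G j) (\<lambda>_. UNIV::'a set). \<forall>j\<in>J. \<exists>i\<in>G j. z i = 0}"
  using assms(3-)
proof (induction J rule: finite_induct)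
  case empty
  then show ?case
    using prime_gt_1_nat[OF assms(1)] by simp
next
  case (insert b J)
  let ?U = "\<Union>j\<in>J. G j"
  have disj: "G b \<inter> ?U = {}"
    using insert.hyps(2) insert.prems(3) by (fastforce simp: disjoint_family_on_def)
  have restrict_U: "(\<forall>j\<in>J. \<exists>i\<in>G j. restrict z ?U i = 0) \<longleftrightarrow> (\<forall>j\<in>J. \<exists>i\<in>G j. z i = 0)"
    for z :: "_ \<Rightarrow> 'a"
    by (metis (no_types, lifting) UN_I restrict_apply')
  have restrict_b: "(\<exists>i\<in>G b. restrict z (G b) i = 0) \<longleftrightarrow> (\<exists>i\<in>G b. z i = 0)" for z :: "_ \<Rightarrow> 'a"
    by (metis restrict_apply')
  let ?Zb = "{w\<in>PiE (G b) (\<lambda>_. UNIV::'a set). \<exists>i\<in>G b. w i = 0}"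
  let ?ZU = "{z\<in>PiE ?U (\<lambda>_. UNIV::'a set). \<forall>j\<in>J. \<exists>i\<in>G j. z i = 0}"
  have "card {z\<in>PiE (\<Union>j\<in>insert b J. G j) (\<lambda>_. UNIV::'a set). \<forall>j\<in>insert b J. \<exists>i\<in>G j. z i = 0} =
      card {z\<in>PiE (G b \<union> ?U) (\<lambda>_. UNIV::'a set). (\<exists>i\<in>G b. restrict z (G b) i = 0) \<and>
        (\<forall>j\<in>J. \<exists>i\<in>G j. restrict z ?U i = 0)}"
    by (intro arg_cong[where f = card] Collect_cong) (simp only: restrict_U restrict_b UN_insert ball_simps(7))
  also have "\<dots> = card ?Zb * card ?ZU"
    by (rule card_PiE_Un_filter[OF disj])
  moreover have "\<not> p dvd card ?Zb"
    using insert.prems by (intro not_dvd_card_PiE_with_zero assms(1,2)) auto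
  moreover have "\<not> p dvd card ?ZU"
    using insert.prems disjoint_family_on_mono[of J "insert b J" G] by (intro insert.IH) auto
  ultimately show ?case
    using assms(1) by (simp add: prime_dvd_mult_iff)
qed

section \<open>Evaluating polynomials and counting points\<close>

definition monomial_eval :: "(nat \<Rightarrow>\<^sub>0 nat) \<Rightarrow> (nat \<Rightarrow> 'a::comm_ring_1) \<Rightarrow> 'a" where
  "monomial_eval \<alpha> x = (\<Prod>i\<in>Poly_Mapping.keys \<alpha>. x i ^ Poly_Mapping.lookup \<alpha> i)"

lemma monomial_eval_superset:
  assumes "finite T" "Poly_Mapping.keys \<alpha> \<subseteq> T"
  shows "monomial_eval \<alpha> x = (\<Prod>i\<in>T. x i ^ Poly_Mapping.lookup \<alpha> i)"
  unfolding monomial_eval_def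
  by (rule prod.mono_neutral_left) (use assms in \<open>auto simp: in_keys_iff\<close>)

lemma monomial_degree_superset:
  assumes "finite T" "Poly_Mapping.keys \<alpha> \<subseteq> T"
  shows "monomial_degree \<alpha> = (\<Sum>i\<in>T. Poly_Mapping.lookup \<alpha> i)"
  unfolding monomial_degree_def
  by (rule sum.mono_neutral_left) (use assms in \<open>auto simp: in_keys_iff\<close>)

lemma mpoly_eval_superset:
  assumes "finite S" "Poly_Mapping.keys f \<subseteq> S"
  shows "mpoly_eval f x = (\<Sum>\<alpha>\<in>S. Poly_Mapping.lookup f \<alpha> * monomial_eval \<alpha> x)"
  unfolding mpoly_eval_def monomial_eval_def
  by (rule sum.mono_neutral_left) (use assms in \<open>auto simp: in_keys_iff\<close>)

lemma mpoly_eval_add: "mpoly_eval (f + g) x = mpoly_eval f x + mpoly_eval g x"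
proof -
  let ?S = "Poly_Mapping.keys f \<union> Poly_Mapping.keys g"
  have "mpoly_eval (f + g) x = (\<Sum>\<alpha>\<in>?S. Poly_Mapping.lookup (f + g) \<alpha> * monomial_eval \<alpha> x)"
    using keys_add[of f g] by (intro mpoly_eval_superset) auto
  also have "\<dots> = (\<Sum>\<alpha>\<in>?S. Poly_Mapping.lookup f \<alpha> * monomial_eval \<alpha> x) +
      (\<Sum>\<alpha>\<in>?S. Poly_Mapping.lookup g \<alpha> * monomial_eval \<alpha> x)"
    by (simp add: lookup_add distrib_right sum.distrib)
  also have "\<dots> = mpoly_eval f x + mpoly_eval g x"
    by (subst (1 2) mpoly_eval_superset[of ?S]) auto
  finally show ?thesis .
qed

lemma mpoly_eval_zero: "mpoly_eval 0 x = 0"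
  by (simp add: mpoly_eval_def)

lemma mpoly_eval_sum: "mpoly_eval (\<Sum>j\<in>J. f j) x = (\<Sum>j\<in>J. mpoly_eval (f j) x)"
  by (induction J rule: infinite_finite_induct) (simp_all add: mpoly_eval_zero mpoly_eval_add)

lemma mpoly_eval_single: "mpoly_eval (Poly_Mapping.single \<alpha> a) x = a * monomial_eval \<alpha> x"
  by (simp add: mpoly_eval_superset[of "{\<alpha>}"])

lemma monomial_eval_single: "monomial_eval (Poly_Mapping.single i d) x = x i ^ d"
  by (simp add: monomial_eval_superset[of "{i}"])

lemma single_neq_zero: "v \<noteq> 0 \<Longrightarrow> Poly_Mapping.single k v \<noteq> 0"
  by (metis lookup_single_eq lookup_zero)

lemma N_AS_eq_sum:
  "N_AS k q f = (\<Sum>x\<in>PiE {..<k} (\<lambda>_. UNIV). AS_count q (mpoly_eval f (x::nat \<Rightarrow> 'a::{finite,field})))"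
proof -
  have "N_AS k q f = card (SIGMA x:PiE {..<k} (\<lambda>_. UNIV::'a set). {y. mpoly_eval f x = y ^ q - y})"
    unfolding N_AS_def Sigma_def by (rule arg_cong[where f = card]) blast
  also have "\<dots> = (\<Sum>x\<in>PiE {..<k} (\<lambda>_. UNIV). AS_count q (mpoly_eval f x))"
    by (simp add: finite_PiE AS_count_def eq_commute)
  finally show ?thesis .
qed

lemma N_AS_pivot:
  fixes f :: "'a::{finite,field} mpoly"
  assumes "c \<le> k"
    and eval: "\<And>x. mpoly_eval f x = (\<Sum>j<c. x j * R j x)"
    and local: "\<And>j x x'. j < c \<Longrightarrow> (\<And>i. c \<le> i \<Longrightarrow> i < k \<Longrightarrow> x i = x' i) \<Longrightarrow> R j x = R j x'"
  shows "N_AS k q f = CARD('a) ^ c *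
    (\<Sum>z\<in>PiE {c..<k} (\<lambda>_. UNIV). if \<forall>j<c. R j z = 0 then AS_count q (0::'a) else 1)"
proof -
  have "{..<k} = {c..<k} \<union> {..<c}"
    using assms(1) by auto
  then have "N_AS k q f =
      (\<Sum>x\<in>PiE ({c..<k} \<union> {..<c}) (\<lambda>_. UNIV). AS_count q (\<Sum>j\<in>{..<c}. x j * R j x))"
    by (simp add: N_AS_eq_sum eval)
  also have "\<dots> = CARD('a) ^ c *
      (\<Sum>z\<in>PiE {c..<k} (\<lambda>_. UNIV). if \<forall>j\<in>{..<c}. R j z = 0 then AS_count q (0::'a) else 1)"
    by (subst sum_AS_count_pivot) (auto intro: local)
  finally show ?thesis
    unfolding Ball_def lessThan_iff .
qed

text \<open>As \<open>p\<close> divides \<open>AS_count q 0\<close> and \<open>CARD('a)\<close>, adding the number \<open>B\<close> of common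
  zeros of the \<open>R j\<close> to the sum in \<open>N_AS_pivot\<close> gives a multiple of \<open>p\<close>.\<close>

lemma multiplicity_N_AS_pivot:
  fixes f :: "'a::{finite,field} mpoly"
  assumes "prime p" "CARD('a) = p ^ n" "q = p ^ e" "e \<ge> 1" "c < k"
    and eval: "\<And>x. mpoly_eval f x = (\<Sum>j<c. x j * R j x)"
    and local: "\<And>j x x'. j < c \<Longrightarrow> (\<And>i. c \<le> i \<Longrightarrow> i < k \<Longrightarrow> x i = x' i) \<Longrightarrow> R j x = R j x'"
    and zeros: "\<not> p dvd card {z\<in>PiE {c..<k} (\<lambda>_. UNIV). \<forall>j<c. R j z = 0}"
  shows "multiplicity p (N_AS k q f) = n * c"
proof -
  define M where "M = (\<Sum>z\<in>PiE {c..<k} (\<lambda>_. UNIV). if \<forall>j<c. R j z = 0 then AS_count q (0::'a) else 1)"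
  define B where "B = card {z\<in>PiE {c..<k} (\<lambda>_. UNIV::'a set). \<forall>j<c. R j z = 0}"
  have "M + B = CARD('a) ^ (k - c) + AS_count q (0::'a) * B"
    unfolding M_def B_def by (subst sum_if_add_card_filter) (simp_all add: card_PiE finite_PiE)
  moreover have "p dvd CARD('a) ^ (k - c)"
    using prime_dvd_CARD[OF assms(1,2)] assms(5) by (meson dvd_power dvd_trans zero_less_diff)
  moreover have "p dvd AS_count q (0::'a)"
    using prime_dvd_AS_count_zero assms(1-4) by blast
  ultimately have "p dvd M + B"
    by simp
  then have "\<not> p dvd M"
    using zeros dvd_add_right_iff unfolding B_def by blast
  moreover have "N_AS k q f = M * p ^ (n * c)"
    unfolding M_def using N_AS_pivot[OF _ eval local] assms(2,5) by (simp add: power_mult)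
  ultimately show ?thesis
    using assms(1) multiplicity_prime_elem_times_other[of p M "p ^ (n * c)"]
    by (simp add: prime_imp_prime_elem)
qed

section \<open>Linear forms and one variable\<close>

lemma ex_linear_multiplicity:
  assumes "prime p" "CARD('a::{finite,field}) = p ^ n" "k \<ge> 1"
  shows "\<exists>f :: 'a mpoly. mpoly_in_vars k f \<and> homogeneous_of_degree 1 f \<and>
    multiplicity p (N_AS k q f) = n * k"
proof -
  let ?f = "Poly_Mapping.single (Poly_Mapping.single 0 1) 1 :: 'a mpoly"
  have "N_AS k q ?f = CARD('a) ^ k * (\<Sum>z\<in>PiE {k..<k} (\<lambda>_. UNIV::'a set).
      if \<forall>j<k. (if j = 0 then 1 else 0) = (0::'a) then AS_count q (0::'a) else 1)"
    by (rule N_AS_pivot[where R = "\<lambda>j x. if j = 0 then 1 else 0"])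
      (use assms(3) in \<open>simp_all add: mpoly_eval_single monomial_eval_single sum.remove[of "{..<k}" 0]\<close>)
  then have "N_AS k q ?f = p ^ (n * k)"
    using assms(2,3) by (auto simp: power_mult)
  moreover have "mpoly_in_vars k ?f" "homogeneous_of_degree 1 ?f"
    using assms(3)
    by (simp_all add: mpoly_in_vars_def homogeneous_of_degree_def monomial_degree_def single_neq_zero)
  ultimately show ?thesis
    using assms(1) by (auto simp: prime_imp_prime_elem)
qed

lemma multiplicity_le_of_le_prime_power:
  assumes "prime (p::nat)" "N \<le> p ^ n"
  shows "multiplicity p N \<le> n"
proof (cases "N = 0")
  case False
  then have "p ^ multiplicity p N \<le> N"
    using multiplicity_dvd by (intro dvd_imp_le) auto
  then have "p ^ multiplicity p N \<le> p ^ n"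
    using assms(2) by linarith
  then show ?thesis
    using prime_gt_1_nat[OF assms(1)] power_le_imp_le_exp by blast
qed simp

lemma sum_scaled_power_nonzero:
  fixes h :: "'a::{finite,field} \<Rightarrow> nat"
  assumes "d \<ge> 1"
  shows "(\<Sum>a\<in>UNIV - {0}. \<Sum>t\<in>UNIV. h (a * t ^ d)) = (CARD('a) - 1) * (\<Sum>w\<in>UNIV. h w)"
proof -
  have scaled: "(\<Sum>a\<in>UNIV - {0}. h (a * t ^ d)) = (\<Sum>w\<in>UNIV - {0}. h w)" if "t \<noteq> 0" for t :: 'a
    by (rule sum.reindex_bij_witness[of _ "\<lambda>w. w / t ^ d" "\<lambda>a. a * t ^ d"]) (use that in auto)
  have "(\<Sum>a\<in>UNIV - {0}. \<Sum>t\<in>UNIV. h (a * t ^ d)) = (\<Sum>t\<in>UNIV. \<Sum>a\<in>UNIV - {0}. h (a * t ^ d))"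
    by (rule sum.swap)
  also have "\<dots> = (\<Sum>a\<in>UNIV - {0::'a}. h 0) + (\<Sum>t\<in>UNIV - {0::'a}. \<Sum>a\<in>UNIV - {0}. h (a * t ^ d))"
    using assms by (simp add: sum.remove[of UNIV 0] power_0_left)
  also have "\<dots> = (CARD('a) - 1) * (h 0 + (\<Sum>w\<in>UNIV - {0}. h w))"
    by (simp add: scaled card_Diff_singleton distrib_left)
  also have "h 0 + (\<Sum>w\<in>UNIV - {0}. h w) = (\<Sum>w\<in>UNIV. h w)"
    by (simp add: sum.remove[of UNIV 0])
  finally show ?thesis .
qed

lemma ex_scaled_power_sum_le:
  fixes h :: "'a::{finite,field} \<Rightarrow> nat"
  assumes "d \<ge> 1"
  obtains a where "a \<noteq> 0" "(\<Sum>t\<in>UNIV. h (a * t ^ d)) \<le> (\<Sum>w\<in>UNIV. h w)"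
proof -
  have "\<exists>a\<in>UNIV - {0}. (\<Sum>t\<in>UNIV. h (a * t ^ d)) \<le> (\<Sum>w\<in>UNIV. h w)"
  proof (rule ccontr)
    assume above: "\<not> ?thesis"
    have "(\<Sum>a\<in>UNIV - {0::'a}. \<Sum>w\<in>UNIV. h w) < (\<Sum>a\<in>UNIV - {0}. \<Sum>t\<in>UNIV. h (a * t ^ d))"
    proof (rule sum_strict_mono)
      have "(1::'a) \<in> UNIV - {0}"
        by simp
      then show "UNIV - {0::'a} \<noteq> {}"
        by blast
      show "(\<Sum>w\<in>UNIV. h w) < (\<Sum>t\<in>UNIV. h (a * t ^ d))" if "a \<in> UNIV - {0}" for a
        using above that not_le by blast
    qed simp
    then show False
      using sum_scaled_power_nonzero[OF assms, of h] by (simp add: card_Diff_singleton)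
  qed
  then show ?thesis
    using that by blast
qed

lemma ex_univariate_multiplicity_le:
  assumes "prime p" "CARD('a::{finite,field}) = p ^ n" "d \<ge> 1"
  shows "\<exists>f :: 'a mpoly. mpoly_in_vars 1 f \<and> homogeneous_of_degree d f \<and>
    multiplicity p (N_AS 1 q f) \<le> n"
proof -
  obtain a :: 'a where a: "a \<noteq> 0" "(\<Sum>t\<in>UNIV. AS_count q (a * t ^ d)) \<le> CARD('a)"
    using ex_scaled_power_sum_le[where h = "AS_count q", OF assms(3)] by (metis sum_AS_count)
  define f :: "'a mpoly" where "f = Poly_Mapping.single (Poly_Mapping.single 0 d) a"
  have "N_AS 1 q f = (\<Sum>x\<in>PiE {0::nat} (\<lambda>_. UNIV). AS_count q (a * x 0 ^ d))"
    by (simp add: f_def N_AS_eq_sum mpoly_eval_single monomial_eval_single lessThan_Suc)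
  also have "\<dots> \<le> p ^ n"
    using a(2) assms(2) sum_PiE_singleton[of "\<lambda>t. AS_count q (a * t ^ d)" "0::nat" UNIV] by simp
  finally have "multiplicity p (N_AS 1 q f) \<le> n"
    by (rule multiplicity_le_of_le_prime_power[OF assms(1)])
  moreover have "mpoly_in_vars 1 f" "homogeneous_of_degree d f"
    using a(1) assms(3)
    by (simp_all add: f_def mpoly_in_vars_def homogeneous_of_degree_def monomial_degree_def single_neq_zero)
  ultimately show ?thesis
    by blast
qed

section \<open>Block monomials\<close>

text \<open>\<open>block_monomial j G d\<close> is \<open>x\<^sub>j * x\<^sub>m ^ (d - card G) * (\<Prod>i\<in>G - {m}. x\<^sub>i)\<close> with
  \<open>m = Min G\<close>: for \<open>j \<notin> G\<close> and \<open>0 < card G < d\<close> it has degree \<open>d\<close>, and its cofactor of \<open>x\<^sub>j\<close>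
  vanishes exactly where some \<open>x\<^sub>i\<close>, \<open>i \<in> G\<close>, does.\<close>

definition block_exponent :: "nat set \<Rightarrow> nat \<Rightarrow> nat \<Rightarrow> nat" where
  "block_exponent G d i = (if i \<in> G then if i = Min G then d - card G else 1 else 0)"

definition block_monomial :: "nat \<Rightarrow> nat set \<Rightarrow> nat \<Rightarrow> (nat \<Rightarrow>\<^sub>0 nat)" where
  "block_monomial j G d = Abs_poly_mapping (\<lambda>i. if i = j then 1 else block_exponent G d i)"

lemma lookup_block_monomial:
  assumes "finite G"
  shows "Poly_Mapping.lookup (block_monomial j G d) = (\<lambda>i. if i = j then 1 else block_exponent G d i)"
proof -
  have "finite {i. (if i = j then 1 else block_exponent G d i) \<noteq> 0}"
    by (rule finite_subset[of _ "insert j G"]) (use assms in \<open>auto simp: block_exponent_def\<close>)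
  then show ?thesis
    by (simp add: block_monomial_def)
qed

lemma keys_block_monomial:
  assumes "finite G"
  shows "Poly_Mapping.keys (block_monomial j G d) \<subseteq> insert j G"
  using assms by (auto simp: in_keys_iff lookup_block_monomial block_exponent_def split: if_splits)

lemma sum_block_exponent:
  assumes "finite G" "G \<noteq> {}" "card G \<le> d"
  shows "(\<Sum>i\<in>G. block_exponent G d i) = d - 1"
proof -
  have "Min G \<in> G"
    using assms(1,2) by (rule Min_in)
  then have "(\<Sum>i\<in>G. block_exponent G d i) = (d - card G) + (\<Sum>i\<in>G - {Min G}. 1)"
    using assms(1) by (simp add: sum.remove block_exponent_def)
  moreover have "(\<Sum>i\<in>G - {Min G}. 1) = card G - 1"
    using assms(1) \<open>Min G \<in> G\<close> by (simp add: card_Diff_singleton)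
  moreover have "card G \<ge> 1"
    using assms(1,2) by (simp add: Suc_le_eq card_gt_0_iff)
  ultimately show ?thesis
    using assms(3) by linarith
qed

lemma monomial_degree_block_monomial:
  assumes "finite G" "G \<noteq> {}" "card G \<le> d" "j \<notin> G"
  shows "monomial_degree (block_monomial j G d) = d"
proof -
  have "card G > 0"
    using assms(1,2) by (simp add: card_gt_0_iff)
  have "monomial_degree (block_monomial j G d) = 1 + (\<Sum>i\<in>G. if i = j then 1 else block_exponent G d i)"
    using assms by (simp add: monomial_degree_superset[OF _ keys_block_monomial] lookup_block_monomial)
  also have "\<dots> = 1 + (\<Sum>i\<in>G. block_exponent G d i)"
    using assms(4) by (intro arg_cong[where f = "(+) 1"] sum.cong) auto
  also have "\<dots> = d"
    using assms \<open>card G > 0\<close> by (simp add: sum_block_exponent)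
  finally show ?thesis .
qed

lemma monomial_eval_block_monomial:
  assumes "finite G" "j \<notin> G"
  shows "monomial_eval (block_monomial j G d) x = x j * (\<Prod>i\<in>G. x i ^ block_exponent G d i)"
proof -
  have "monomial_eval (block_monomial j G d) x = x j * (\<Prod>i\<in>G. x i ^ (if i = j then 1 else block_exponent G d i))"
    using assms by (simp add: monomial_eval_superset[OF _ keys_block_monomial] lookup_block_monomial)
  also have "\<dots> = x j * (\<Prod>i\<in>G. x i ^ block_exponent G d i)"
    using assms(2) by (intro arg_cong[where f = "(*) (x j)"] prod.cong) auto
  finally show ?thesis .
qed

lemma prod_block_exponent_eq_0_iff:
  fixes x :: "nat \<Rightarrow> 'a::semidom"
  assumes "finite G" "card G < d"
  shows "(\<Prod>i\<in>G. x i ^ block_exponent G d i) = 0 \<longleftrightarrow> (\<exists>i\<in>G. x i = 0)"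
proof -
  have "block_exponent G d i > 0" if "i \<in> G" for i
    using assms(2) that by (simp add: block_exponent_def)
  then show ?thesis
    using assms(1) by auto
qed

definition block_poly :: "nat \<Rightarrow> (nat \<Rightarrow> nat set) \<Rightarrow> nat \<Rightarrow> 'a::comm_semiring_1 mpoly" where
  "block_poly c B d = (\<Sum>j<c. Poly_Mapping.single (block_monomial j (B j) d) 1)"

lemma keys_block_poly: "Poly_Mapping.keys (block_poly c B d) \<subseteq> (\<lambda>j. block_monomial j (B j) d) ` {..<c}"
  unfolding block_poly_def by (rule order_trans[OF keys_sum]) auto

lemma mpoly_in_vars_block_poly:
  assumes "c \<le> k" "\<And>j. j < c \<Longrightarrow> B j \<subseteq> {c..<k}"
  shows "mpoly_in_vars k (block_poly c B d)"
  unfolding mpoly_in_vars_def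
proof
  fix \<alpha> assume "\<alpha> \<in> Poly_Mapping.keys (block_poly c B d)"
  then obtain j where "j < c" "\<alpha> = block_monomial j (B j) d"
    using keys_block_poly by blast
  moreover from this have "finite (B j)" "insert j (B j) \<subseteq> {..<k}"
    using assms by (auto intro: finite_subset[of _ "{c..<k}"] dest!: assms(2))
  ultimately show "Poly_Mapping.keys \<alpha> \<subseteq> {..<k}"
    using keys_block_monomial by blast
qed

lemma homogeneous_block_poly:
  assumes "c \<ge> 1" "\<And>j. j < c \<Longrightarrow> B j \<subseteq> {c..<k}" "\<And>j. j < c \<Longrightarrow> B j \<noteq> {}"
    and "\<And>j. j < c \<Longrightarrow> card (B j) \<le> d"
  shows "homogeneous_of_degree d (block_poly c B d :: 'a::comm_semiring_1 mpoly)"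
proof -
  have fin: "finite (B j)" if "j < c" for j
    using assms(2)[OF that] by (rule finite_subset) simp
  have notin: "j \<notin> B j'" if "j < c" "j' < c" for j j'
    using assms(2)[OF that(2)] that(1) by auto
  have lookup: "Poly_Mapping.lookup (block_monomial j' (B j') d) j = (if j = j' then 1 else 0)"
    if "j < c" "j' < c" for j j'
    using fin[OF that(2)] notin[OF that] by (simp add: lookup_block_monomial block_exponent_def)
  have inj: "j' = j" if "j' < c" "j < c" "block_monomial j' (B j') d = block_monomial j (B j) d" for j j'
  proof -
    have "Poly_Mapping.lookup (block_monomial j (B j) d) j' = 1"
      using lookup[OF that(1,1)] that(3) by simp
    then show ?thesis
      using lookup[OF that(1,2)] by (metis zero_neq_one)
  qed
  have "Poly_Mapping.lookup (block_poly c B d :: 'a mpoly) (block_monomial 0 (B 0) d) =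
      (\<Sum>j<c. if j = 0 then 1 else 0)"
    unfolding block_poly_def lookup_sum
  proof (intro sum.cong refl)
    fix j assume "j \<in> {..<c}"
    then show "Poly_Mapping.lookup (Poly_Mapping.single (block_monomial j (B j) d) 1) (block_monomial 0 (B 0) d) =
        (if j = 0 then 1 else (0::'a))"
      using inj[of j 0] assms(1) by (auto simp: lookup_single when_def)
  qed
  also have "\<dots> = (1::'a)"
    using assms(1) by simp
  finally have "block_poly c B d \<noteq> (0::'a mpoly)"
    by auto
  moreover have "monomial_degree \<alpha> = d"
    if key: "\<alpha> \<in> Poly_Mapping.keys (block_poly c B d :: 'a mpoly)" for \<alpha>
  proof -
    obtain j where "j < c" "\<alpha> = block_monomial j (B j) d"
      using key keys_block_poly by blast
    then show ?thesis
      using fin notin assms(3,4) by (simp add: monomial_degree_block_monomial)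
  qed
  ultimately show ?thesis
    by (simp add: homogeneous_of_degree_def)
qed

lemma mpoly_eval_block_poly:
  assumes "\<And>j. j < c \<Longrightarrow> B j \<subseteq> {c..<k}"
  shows "mpoly_eval (block_poly c B d) x = (\<Sum>j<c. x j * (\<Prod>i\<in>B j. x i ^ block_exponent (B j) d i))"
  unfolding block_poly_def mpoly_eval_sum mpoly_eval_single
proof (intro sum.cong refl)
  fix j assume "j \<in> {..<c}"
  then have "B j \<subseteq> {c..<k}" "j < c"
    using assms by auto
  then have "finite (B j)" "j \<notin> B j"
    using finite_subset by auto
  then show "1 * monomial_eval (block_monomial j (B j) d) x = x j * (\<Prod>i\<in>B j. x i ^ block_exponent (B j) d i)"
    by (simp add: monomial_eval_block_monomial)
qed

lemma multiplicity_N_AS_block_poly: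
  fixes B :: "nat \<Rightarrow> nat set"
  assumes "prime p" "CARD('a::{finite,field}) = p ^ n" "q = p ^ e" "e \<ge> 1" "c < k"
    and "\<And>j. j < c \<Longrightarrow> B j \<subseteq> {c..<k}" "\<And>j. j < c \<Longrightarrow> card (B j) < d"
    and zeros: "\<not> p dvd card {z\<in>PiE {c..<k} (\<lambda>_. UNIV::'a set). \<forall>j<c. \<exists>i\<in>B j. z i = 0}"
  shows "multiplicity p (N_AS k q (block_poly c B d :: 'a mpoly)) = n * c"
proof (rule multiplicity_N_AS_pivot[OF assms(1-5)])
  show "mpoly_eval (block_poly c B d) x = (\<Sum>j<c. x j * (\<Prod>i\<in>B j. x i ^ block_exponent (B j) d i))"
    for x :: "nat \<Rightarrow> 'a"
    using assms(6) by (rule mpoly_eval_block_poly)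
  show "(\<Prod>i\<in>B j. x i ^ block_exponent (B j) d i) = (\<Prod>i\<in>B j. x' i ^ block_exponent (B j) d i)"
    if "j < c" "\<And>i. c \<le> i \<Longrightarrow> i < k \<Longrightarrow> x i = x' i" for j and x x' :: "nat \<Rightarrow> 'a"
    using assms(6)[OF that(1)] that(2) by (intro prod.cong) auto
  have "(\<Prod>i\<in>B j. z i ^ block_exponent (B j) d i) = 0 \<longleftrightarrow> (\<exists>i\<in>B j. z i = 0)"
    if "j < c" for j and z :: "nat \<Rightarrow> 'a"
    using assms(6,7)[OF that] by (intro prod_block_exponent_eq_0_iff) (auto intro: finite_subset)
  then have "{z\<in>PiE {c..<k} (\<lambda>_. UNIV::'a set). \<forall>j<c. (\<Prod>i\<in>B j. z i ^ block_exponent (B j) d i) = 0} =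
      {z\<in>PiE {c..<k} (\<lambda>_. UNIV::'a set). \<forall>j<c. \<exists>i\<in>B j. z i = 0}"
    by auto
  then show "\<not> p dvd card {z\<in>PiE {c..<k} (\<lambda>_. UNIV::'a set). \<forall>j<c. (\<Prod>i\<in>B j. z i ^ block_exponent (B j) d i) = 0}"
    using zeros by simp
qed

definition consecutive_block :: "nat \<Rightarrow> nat \<Rightarrow> nat \<Rightarrow> nat \<Rightarrow> nat set" where
  "consecutive_block c s k j = {i\<in>{c..<k}. (i - c) div s = j}"

lemma card_consecutive_block_le:
  assumes "s > 0"
  shows "card (consecutive_block c s k j) \<le> s"
proof -
  have "inj_on (\<lambda>i. (i - c) mod s) (consecutive_block c s k j)"
  proof (rule inj_onI)
    fix i i' assume "i \<in> consecutive_block c s k j" "i' \<in> consecutive_block c s k j"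
      and "(i - c) mod s = (i' - c) mod s"
    then have "(i - c) div s * s + (i - c) mod s = (i' - c) div s * s + (i' - c) mod s"
      and "c \<le> i" "c \<le> i'"
      by (auto simp: consecutive_block_def)
    then show "i = i'"
      by simp
  qed
  moreover have "(\<lambda>i. (i - c) mod s) ` consecutive_block c s k j \<subseteq> {..<s}"
    using assms by auto
  ultimately show ?thesis
    by (metis card_inj_on_le card_lessThan finite_lessThan)
qed

lemma Union_consecutive_block:
  assumes "s > 0" "k \<le> c + c * s"
  shows "(\<Union>j<c. consecutive_block c s k j) = {c..<k}"
proof
  show "{c..<k} \<subseteq> (\<Union>j<c. consecutive_block c s k j)"
  proof
    fix i assume "i \<in> {c..<k}"
    moreover from this have "(i - c) div s < c"
      using assms by (simp add: div_less_iff_less_mult mult.commute) linarith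
    ultimately show "i \<in> (\<Union>j<c. consecutive_block c s k j)"
      by (auto simp: consecutive_block_def)
  qed
qed (auto simp: consecutive_block_def)

lemma ex_block_poly_multiplicity:
  assumes "prime p" "CARD('a::{finite,field}) = p ^ n" "q = p ^ e" "e \<ge> 1"
    and "d \<ge> 2" "c < k" "k \<le> c * d"
  shows "\<exists>f :: 'a mpoly. mpoly_in_vars k f \<and> homogeneous_of_degree d f \<and>
    multiplicity p (N_AS k q f) = n * c"
proof -
  define s where "s = d - 1"
  define G where "G = consecutive_block c s k"
  \<comment> \<open>An index whose block is empty reuses block \<open>0\<close>; this leaves the common zeros unchanged.\<close>
  define B where "B j = (if G j = {} then G 0 else G j)" for j
  define J where "J = {j\<in>{..<c}. G j \<noteq> {}}"
  have s: "s > 0" "k \<le> c + c * s" "s < d"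
    using assms(5,7) by (auto simp: s_def algebra_simps)
  have "c \<ge> 1"
    using assms(6,7) by (cases c) auto
  have G0: "c \<in> G 0"
    using assms(6) by (simp add: G_def consecutive_block_def)
  have B: "B j \<subseteq> {c..<k}" "B j \<noteq> {}" "card (B j) < d" for j
    using G0 card_consecutive_block_le[OF s(1)] s(3)
    by (auto simp: B_def G_def consecutive_block_def intro: le_less_trans)
  have "(\<Union>j\<in>J. G j) = (\<Union>j<c. G j)"
    by (auto simp: J_def)
  also have "\<dots> = {c..<k}"
    unfolding G_def by (rule Union_consecutive_block[OF s(1,2)])
  finally have UJ: "(\<Union>j\<in>J. G j) = {c..<k}" .
  have "0 \<in> J"
    using G0 \<open>c \<ge> 1\<close> by (auto simp: J_def)
  then have "(\<forall>j<c. \<exists>i\<in>B j. z i = 0) \<longleftrightarrow> (\<forall>j\<in>J. \<exists>i\<in>G j. z i = 0)" for z :: "nat \<Rightarrow> 'a"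
    by (auto simp: B_def J_def)
  then have zeros: "{z\<in>PiE {c..<k} (\<lambda>_. UNIV::'a set). \<forall>j<c. \<exists>i\<in>B j. z i = 0} =
      {z\<in>PiE (\<Union>j\<in>J. G j) (\<lambda>_. UNIV). \<forall>j\<in>J. \<exists>i\<in>G j. z i = 0}"
    by (simp add: UJ)
  have "\<not> p dvd card {z\<in>PiE {c..<k} (\<lambda>_. UNIV::'a set). \<forall>j<c. \<exists>i\<in>B j. z i = 0}"
    unfolding zeros using assms(1) prime_dvd_CARD[OF assms(1,2)]
    by (intro not_dvd_card_PiE_zero_in_each_block)
      (auto simp: J_def G_def consecutive_block_def disjoint_family_on_def)
  then have "multiplicity p (N_AS k q (block_poly c B d :: 'a mpoly)) = n * c"
    using B by (intro multiplicity_N_AS_block_poly[OF assms(1-4,6)])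
  moreover have "mpoly_in_vars k (block_poly c B d :: 'a mpoly)"
    using assms(6) B by (intro mpoly_in_vars_block_poly) auto
  moreover have "homogeneous_of_degree d (block_poly c B d :: 'a mpoly)"
    using \<open>c \<ge> 1\<close> B by (intro homogeneous_block_poly) (auto simp: less_imp_le)
  ultimately show ?thesis
    by blast
qed

lemma le_nat_ceiling_divide_mult:
  assumes "d > 0"
  shows "k \<le> nat \<lceil>real k / real d\<rceil> * d"
proof -
  have "real k \<le> of_int \<lceil>real k / real d\<rceil> * real d"
    using assms by (intro ceiling_divide_upper) simp
  also have "\<dots> = real (nat \<lceil>real k / real d\<rceil> * d)"
    by simp
  finally show ?thesis
    by (simp only: of_nat_le_iff)
qed

lemma nat_ceiling_divide_less:
  assumes "d \<ge> 2" "k \<ge> 2"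
  shows "nat \<lceil>real k / real d\<rceil> < k"
proof -
  define C where "C = \<lceil>real k / real d\<rceil>"
  have "C \<ge> 1"
    using assms by (simp add: C_def)
  then have "(of_int C - 1) * 2 \<le> (of_int C - 1) * real d"
    using assms(1) by (intro mult_left_mono) simp_all
  also have "\<dots> < real k"
    unfolding C_def using assms by (intro ceiling_divide_lower) simp
  finally have "2 * real_of_int C < real k + 2"
    by (simp add: algebra_simps)
  moreover have "real k \<ge> 2"
    using assms(2) by simp
  ultimately have "real_of_int C < real_of_int (int k)"
    by simp
  then have "C < int k"
    by simp
  with \<open>C \<ge> 1\<close> show ?thesis
    by (simp add: C_def nat_less_iff)
qed

theorem proposition5p2:
  fixes p e q m k :: nat and d :: nat
  assumes "prime p" and "e \<ge> 1" and "q = p ^ e"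
    and "m \<ge> 1" and "k \<ge> 1"
    and "card (UNIV :: 'a set) = q ^ m"
    and "0 < d" and "d \<le> k * (q ^ m - 1)"
  shows "\<exists>f :: 'a::{finite,field} mpoly. mpoly_in_vars k f \<and> homogeneous_of_degree d f \<and>
           multiplicity p (N_AS k q f) \<le> e * m * nat \<lceil>real k / real d\<rceil>"
proof -
  define c where "c = nat \<lceil>real k / real d\<rceil>"
  have card: "CARD('a) = p ^ (e * m)"
    using assms(3,6) by (simp add: power_mult)
  have kc: "k \<le> c * d"
    unfolding c_def using assms(7) by (rule le_nat_ceiling_divide_mult)
  consider (linear) "d = 1" | (univariate) "k = 1" "d \<ge> 2" | (general) "d \<ge> 2" "k \<ge> 2"
    using assms(5,7) by linarith
  then show ?thesis
  proof cases
    case linear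
    then show ?thesis
      using ex_linear_multiplicity[OF assms(1) card assms(5), of q] by (simp add: c_def) (blast intro: eq_imp_le)
  next
    case univariate
    then obtain f :: "'a mpoly" where
      f: "mpoly_in_vars k f" "homogeneous_of_degree d f" "multiplicity p (N_AS k q f) \<le> e * m"
      using ex_univariate_multiplicity_le[OF assms(1) card, of d q] by auto
    moreover have "e * m \<le> e * m * c"
      using kc univariate by (cases c) auto
    ultimately show ?thesis
      unfolding c_def[symmetric] by (blast intro: le_trans)
  next
    case general
    then show ?thesis
      using ex_block_poly_multiplicity[OF assms(1) card assms(3,2) general(1) _ kc]
        nat_ceiling_divide_less[OF general] unfolding c_def by (auto simp: mult.commute)
  qed
qed

end
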